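(* Let $K$ be an arbitrary field, $n\ge1$, and let $\mathcal J\subset A$ be the ideal generated by $T_1,\dots,T_n$ and the entries of $\Phi^2$. Then for all $1\le p\le n$, $1\le r\le p$, and all $a_1,\dots,a_{p-r},b_1,\dots,b_{p-r}\in[1,n]$, the polynomial $$\mathrm{Rel}(r,p)=\sum_{1\le i_1<\dots<i_r\le n}M(a_1,\dots,a_{p-r},i_1,\dots,i_r;\,b_1,\dots,b_{p-r},i_1,\dots,i_r)$$ lies in $\mathcal J$.
   Context: $A=K[\Phi_{a,b}:1\le a,b\le n]$ with generic matrix $\Phi=(\Phi_{a,b})$. $M(a_1,\dots,a_s;b_1,\dots,b_s)=\det(\Phi_{a_k,b_l})_{1\le k,l\le s}$ for index sequences in $[1,n]$ (zero if an index repeats). $T_i$ is the sum of the principal $i\times i$ minors of $\Phi$. *)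

theory Defs
  imports "HOL-Library.Poly_Mapping" "HOL-Combinatorics.Permutations"
begin

text \<open>The polynomial ring A = K[Phi_{a,b}]: polynomials in variables indexed by
pairs (a,b) of naturals (only 1 <= a,b <= n are used), represented as finitely
supported maps from monomials (finitely supported exponent vectors) to coefficients.\<close>

type_synonym 'k mpoly = "((nat \<times> nat) \<Rightarrow>\<^sub>0 nat) \<Rightarrow>\<^sub>0 'k"

definition Phi :: "nat \<Rightarrow> nat \<Rightarrow> 'k::field mpoly" where
  "Phi a b = Poly_Mapping.single (Poly_Mapping.single (a, b) 1) 1"

text \<open>Minor M(as; bs) = det (Phi_{as_k, bs_l}), via the Leibniz formula
(automatically zero when an index repeats).\<close>
definition minor :: "nat list \<Rightarrow> nat list \<Rightarrow> 'k::field mpoly" where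
  "minor as bs = (\<Sum>\<sigma> | \<sigma> permutes {0..<length as}.
      of_int (sign \<sigma>) * (\<Prod>k<length as. Phi (as ! k) (bs ! (\<sigma> k))))"

definition T :: "nat \<Rightarrow> nat \<Rightarrow> 'k::field mpoly" where
  "T n i = (\<Sum>S | S \<subseteq> {1..n} \<and> card S = i.
      minor (sorted_list_of_set S) (sorted_list_of_set S))"

definition Phi_sq :: "nat \<Rightarrow> nat \<Rightarrow> nat \<Rightarrow> 'k::field mpoly" where
  "Phi_sq n a c = (\<Sum>b=1..n. Phi a b * Phi b c)"

definition in_ideal :: "'a::comm_ring_1 set \<Rightarrow> 'a \<Rightarrow> bool" where
  "in_ideal G x \<longleftrightarrow> (\<exists>F c. finite F \<and> F \<subseteq> G \<and> x = (\<Sum>g\<in>F. c g * g))"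

definition J_gens :: "nat \<Rightarrow> 'k::field mpoly set" where
  "J_gens n = {T n i | i. 1 \<le> i \<and> i \<le> n} \<union> {Phi_sq n a c | a c. a \<in> {1..n} \<and> c \<in> {1..n}}"

definition Rel :: "nat \<Rightarrow> nat \<Rightarrow> nat list \<Rightarrow> nat list \<Rightarrow> 'k::field mpoly" where
  "Rel n r as bs = (\<Sum>S | S \<subseteq> {1..n} \<and> card S = r.
      minor (as @ sorted_list_of_set S) (bs @ sorted_list_of_set S))"

end

theory Submission
  imports Defs "Jordan_Normal_Form.Determinant"
begin

text \<open>Induction on the number of border rows. Without border, Rel(r, r) is the generator T_r.
Otherwise expand the minor along its first row a_1: the border columns b_j contribute
Phi_{a_1 b_j} times relations with one border row fewer, which lie in J by induction, while
the columns i in {i_1, ..., i_r} contribute, after summing over the index set,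
-sum_i Phi_{a_1 i} Rel(r - 1) with i as new first border row. Expanding these once more along
row i, the sum over i collects the products Phi_{a_1 i} Phi_{i c} into entries of Phi^2, so
every term is a multiple of a generator of J.\<close>

interpretation ideal: Modules.module "(*) :: 'a::comm_ring_1 \<Rightarrow> 'a \<Rightarrow> 'a"
  by unfold_locales (simp_all add: algebra_simps)

lemma in_ideal_iff_span: "in_ideal G x \<longleftrightarrow> x \<in> ideal.span G"
  unfolding in_ideal_def ideal.span_explicit by auto

lemma ideal_span_mult_right: "x \<in> ideal.span S \<Longrightarrow> x * c \<in> ideal.span S"
  by (metis ideal.span_scale mult.commute)

definition del_nth :: "nat \<Rightarrow> 'a list \<Rightarrow> 'a list" where
  "del_nth j xs = take j xs @ drop (Suc j) xs"

lemma length_del_nth [simp]: "j < length xs \<Longrightarrow> length (del_nth j xs) = length xs - 1"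
  by (auto simp: del_nth_def)

lemma nth_del_nth:
  "j < length xs \<Longrightarrow> k < length xs - 1 \<Longrightarrow>
    del_nth j xs ! k = xs ! (if k < j then k else Suc k)"
  by (auto simp: del_nth_def nth_append min_def)

lemma set_del_nth_subset: "set (del_nth j xs) \<subseteq> set xs"
  by (auto simp: del_nth_def dest: in_set_takeD in_set_dropD)

lemma del_nth_append_left: "j < length xs \<Longrightarrow> del_nth j (xs @ ys) = del_nth j xs @ ys"
  by (simp add: del_nth_def)

lemma del_nth_append_right: "del_nth (length xs + t) (xs @ ys) = xs @ del_nth t ys"
  by (simp add: del_nth_def)

lemma remove1_nth_eq_del_nth:
  "distinct xs \<Longrightarrow> j < length xs \<Longrightarrow> remove1 (xs ! j) xs = del_nth j xs"
proof (induction xs arbitrary: j)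
  case (Cons x xs)
  then show ?case
    by (cases j) (auto simp: del_nth_def)
qed simp

definition minor_mat :: "(nat \<Rightarrow> nat \<Rightarrow> 'a) \<Rightarrow> nat list \<Rightarrow> nat list \<Rightarrow> 'a mat" where
  "minor_mat X rs cs = mat (length rs) (length rs) (\<lambda>(i, j). X (rs ! i) (cs ! j))"

definition minor_of :: "(nat \<Rightarrow> nat \<Rightarrow> 'a::comm_ring_1) \<Rightarrow> nat list \<Rightarrow> nat list \<Rightarrow> 'a" where
  "minor_of X rs cs = det (minor_mat X rs cs)"

lemma minor_eq_minor_of: "minor rs cs = minor_of Phi rs cs"
  unfolding minor_def minor_of_def minor_mat_def det_def
  by (simp add: atLeast0LessThan)

lemma minor_mat_carrier [simp]: "minor_mat X rs cs \<in> carrier_mat (length rs) (length rs)"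
  by (simp add: minor_mat_def)

lemma minor_of_swap_adjacent:
  "minor_of X (u @ x # y # v) cs = - minor_of X (u @ y # x # v) cs"
proof -
  have "minor_mat X (u @ x # y # v) cs
      = swaprows (length u) (Suc (length u)) (minor_mat X (u @ y # x # v) cs)"
    by (auto simp: minor_mat_def nth_append nth_Cons' mat_swaprows_def)
  then show ?thesis
    unfolding minor_of_def by (simp add: det_swaprows[OF _ _ _ minor_mat_carrier])
qed

lemma minor_of_move_to_front:
  "j < length xs \<Longrightarrow>
    minor_of X (u @ xs ! j # del_nth j xs) cs = (-1) ^ j * minor_of X (u @ xs) cs"
proof (induction j arbitrary: u xs)
  case 0
  then show ?case by (cases xs) (auto simp: del_nth_def)
next
  case (Suc j)
  then obtain x xs' where xs: "xs = x # xs'" and j: "j < length xs'"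
    by (cases xs) auto
  have "minor_of X (u @ xs ! Suc j # del_nth (Suc j) xs) cs
      = - minor_of X ((u @ [x]) @ xs' ! j # del_nth j xs') cs"
    using minor_of_swap_adjacent[of X u "xs' ! j" x] by (simp add: xs del_nth_def)
  also have "\<dots> = - ((-1) ^ j * minor_of X (u @ xs) cs)"
    using Suc.IH[OF j, of "u @ [x]"] by (simp add: xs)
  finally show ?case by simp
qed

lemma minor_of_repeated_row:
  assumes "i < length rs" "j < length rs" "i \<noteq> j" "rs ! i = rs ! j"
  shows "minor_of X rs cs = 0"
  unfolding minor_of_def
  by (rule det_identical_rows[OF minor_mat_carrier assms(3,1,2)])
    (use assms in \<open>auto simp: minor_mat_def row_def\<close>)

lemma minor_of_Cons_expansion:
  assumes "length cs = Suc (length rs)"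
  shows "minor_of X (r0 # rs) cs
    = (\<Sum>j<length cs. (-1) ^ j * X r0 (cs ! j) * minor_of X rs (del_nth j cs))"
proof -
  let ?A = "minor_mat X (r0 # rs) cs"
  have "minor_of X (r0 # rs) cs = (\<Sum>j<length cs. ?A $$ (0, j) * cofactor ?A 0 j)"
    unfolding minor_of_def by (rule laplace_expansion_row) (auto simp: minor_mat_def assms)
  also have "\<dots> = (\<Sum>j<length cs. (-1) ^ j * X r0 (cs ! j) * minor_of X rs (del_nth j cs))"
  proof (rule sum.cong)
    fix j assume j: "j \<in> {..<length cs}"
    then have "mat_delete ?A 0 j = minor_mat X rs (del_nth j cs)"
      using assms by (auto simp: mat_delete_def minor_mat_def nth_del_nth)
    then show "?A $$ (0, j) * cofactor ?A 0 j
        = (-1) ^ j * X r0 (cs ! j) * minor_of X rs (del_nth j cs)"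
      using j assms by (simp add: cofactor_def minor_of_def minor_mat_def)
  qed simp
  finally show ?thesis .
qed

lemma sum_lessThan_add: "(\<Sum>j<m + (k::nat). f j) = (\<Sum>j<m. f j) + (\<Sum>t<k. f (m + t))"
  by (induction k) (simp_all add: add_ac)

lemma minor_of_Cons_append_expansion:
  fixes X :: "nat \<Rightarrow> nat \<Rightarrow> 'a::comm_ring_1"
  assumes "length cs = Suc (length rs)"
  shows "minor_of X (r0 # rs @ L) (cs @ L)
    = (\<Sum>j<length cs. (-1) ^ j * X r0 (cs ! j) * minor_of X (rs @ L) (del_nth j cs @ L))
      - (\<Sum>t<length L. X r0 (L ! t) * minor_of X (L ! t # rs @ del_nth t L) (cs @ del_nth t L))"
proof -
  define f where
    "f j = (-1) ^ j * X r0 ((cs @ L) ! j) * minor_of X (rs @ L) (del_nth j (cs @ L))" for j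
  have "minor_of X (r0 # rs @ L) (cs @ L) = (\<Sum>j<length cs + length L. f j)"
    unfolding f_def by (subst minor_of_Cons_expansion) (simp_all add: assms)
  also have "\<dots> = (\<Sum>j<length cs. f j) + (\<Sum>t<length L. f (length cs + t))"
    by (rule sum_lessThan_add)
  also have "(\<Sum>j<length cs. f j)
      = (\<Sum>j<length cs. (-1) ^ j * X r0 (cs ! j) * minor_of X (rs @ L) (del_nth j cs @ L))"
    by (rule sum.cong) (simp_all add: f_def nth_append del_nth_append_left)
  also have "f (length cs + t)
      = - (X r0 (L ! t) * minor_of X (L ! t # rs @ del_nth t L) (cs @ del_nth t L))"
    if t: "t < length L" for t
  proof -
    txt \<open>Moving row L ! t to the front costs the sign (-1)^(|rs| + t), which cancels the
      cofactor sign (-1)^(|cs| + t) up to a factor -1.\<close>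
    have "minor_of X (L ! t # rs @ del_nth t L) (cs @ del_nth t L)
        = (-1) ^ (length rs + t) * minor_of X (rs @ L) (cs @ del_nth t L)"
      using minor_of_move_to_front[of "length rs + t" "rs @ L" X "[]"] t
      by (simp add: nth_append del_nth_append_right)
    moreover have "(-1) ^ (length cs + t) = - ((-1) ^ (length rs + t) :: 'a)"
      using assms by simp
    ultimately show ?thesis
      by (simp add: f_def nth_append del_nth_append_right)
  qed
  then have "(\<Sum>t<length L. f (length cs + t))
      = - (\<Sum>t<length L. X r0 (L ! t) * minor_of X (L ! t # rs @ del_nth t L) (cs @ del_nth t L))"
    by (simp add: sum_negf)
  finally show ?thesis by simp
qed

lemma sum_sorted_list_of_set_del_nth:
  assumes "finite S"
  shows "(\<Sum>t<card S. g (sorted_list_of_set S ! t) (del_nth t (sorted_list_of_set S)))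
       = (\<Sum>i\<in>S. g i (sorted_list_of_set (S - {i})))"
proof -
  let ?L = "sorted_list_of_set S"
  have "(\<Sum>t<card S. g (?L ! t) (del_nth t ?L))
      = (\<Sum>t<card S. g (?L ! t) (sorted_list_of_set (S - {?L ! t})))"
    using assms
    by (intro sum.cong) (simp_all add: sorted_list_of_set_remove remove1_nth_eq_del_nth)
  also have "\<dots> = (\<Sum>i\<in>S. g i (sorted_list_of_set (S - {i})))"
    using assms by (intro sum.reindex_bij_betw bij_betw_nth) simp_all
  finally show ?thesis .
qed

lemma sum_card_Suc_subsets_remove:
  assumes "finite A"
  shows "(\<Sum>S | S \<subseteq> A \<and> card S = Suc k. \<Sum>i\<in>S. f i (S - {i}))
       = (\<Sum>i\<in>A. \<Sum>S' | S' \<subseteq> A \<and> card S' = k \<and> i \<notin> S'. f i S')"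
proof -
  have fin: "finite {S. S \<subseteq> A \<and> card S = m}" for m
    using assms by (auto intro: finite_subset[of _ "Pow A"])
  have "(\<Sum>S | S \<subseteq> A \<and> card S = Suc k. \<Sum>i\<in>S. f i (S - {i}))
      = (\<Sum>S | S \<subseteq> A \<and> card S = Suc k. \<Sum>i | i \<in> A \<and> i \<in> S. f i (S - {i}))"
    by (intro sum.cong) (auto intro: arg_cong[where f = "sum _"])
  also have "\<dots> = (\<Sum>i\<in>A. \<Sum>S | S \<subseteq> A \<and> card S = Suc k \<and> i \<in> S. f i (S - {i}))"
    using sum.swap_restrict[OF fin assms, of "\<lambda>S i. f i (S - {i})" "\<lambda>S i. i \<in> S", of "Suc k"]
    by simp
  also have "\<dots> = (\<Sum>i\<in>A. \<Sum>S' | S' \<subseteq> A \<and> card S' = k \<and> i \<notin> S'. f i S')"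
  proof (rule sum.cong[OF refl])
    fix i assume i: "i \<in> A"
    show "(\<Sum>S | S \<subseteq> A \<and> card S = Suc k \<and> i \<in> S. f i (S - {i}))
        = (\<Sum>S' | S' \<subseteq> A \<and> card S' = k \<and> i \<notin> S'. f i S')"
      by (rule sum.reindex_bij_witness[where i = "insert i" and j = "\<lambda>S. S - {i}"])
        (use i assms in \<open>auto simp: card_insert_if finite_subset card_Diff_singleton\<close>)
  qed
  finally show ?thesis .
qed

lemma sum_mult_sum_swap:
  fixes x :: "'i \<Rightarrow> 'a::comm_semiring_0"
  shows "(\<Sum>i\<in>A. x i * (\<Sum>j\<in>B. s j * y i j * z j))
    = (\<Sum>j\<in>B. s j * (\<Sum>i\<in>A. x i * y i j) * z j)"
  by (simp add: sum_distrib_left sum_distrib_right mult_ac) (rule sum.swap)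

definition bordered_minor_sum ::
    "(nat \<Rightarrow> nat \<Rightarrow> 'a::comm_ring_1) \<Rightarrow> nat \<Rightarrow> nat \<Rightarrow> nat list \<Rightarrow> nat list \<Rightarrow> 'a" where
  "bordered_minor_sum X n r rs cs = (\<Sum>S | S \<subseteq> {1..n} \<and> card S = r.
      minor_of X (rs @ sorted_list_of_set S) (cs @ sorted_list_of_set S))"

lemma Rel_eq_bordered_minor_sum: "Rel n r rs cs = bordered_minor_sum Phi n r rs cs"
  by (simp add: Rel_def bordered_minor_sum_def minor_eq_minor_of)

lemma T_eq_bordered_minor_sum: "T n r = bordered_minor_sum Phi n r [] []"
  by (simp add: T_def bordered_minor_sum_def minor_eq_minor_of)

lemma bordered_minor_sum_Cons:
  assumes "length cs = Suc (length rs)"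
  shows "bordered_minor_sum X n r (r0 # rs) cs
    = (\<Sum>j<length cs. (-1) ^ j * X r0 (cs ! j) * bordered_minor_sum X n r rs (del_nth j cs))
      - (if r = 0 then 0
         else (\<Sum>i\<in>{1..n}. X r0 i * bordered_minor_sum X n (r - 1) (i # rs) cs))"
proof -
  let ?C = "\<lambda>m. {S. S \<subseteq> {1..n} \<and> card S = m}"
  let ?sl = "sorted_list_of_set :: nat set \<Rightarrow> nat list"
  define g where "g i L = X r0 i * minor_of X (i # rs @ L) (cs @ L)" for i L
  have fin: "S \<in> ?C m \<Longrightarrow> finite S" for S m
    by (auto intro: finite_subset)
  have expand: "minor_of X (r0 # rs @ ?sl S) (cs @ ?sl S)
      = (\<Sum>j<length cs. (-1) ^ j * X r0 (cs ! j) * minor_of X (rs @ ?sl S) (del_nth j cs @ ?sl S))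
        - (\<Sum>i\<in>S. g i (?sl (S - {i})))" if "S \<in> ?C r" for S
    using minor_of_Cons_append_expansion[OF assms, of X r0 "?sl S"]
      sum_sorted_list_of_set_del_nth[OF fin[OF that], of g]
    by (simp add: g_def)
  have "bordered_minor_sum X n r (r0 # rs) cs
      = (\<Sum>S\<in>?C r. \<Sum>j<length cs.
            (-1) ^ j * X r0 (cs ! j) * minor_of X (rs @ ?sl S) (del_nth j cs @ ?sl S))
        - (\<Sum>S\<in>?C r. \<Sum>i\<in>S. g i (?sl (S - {i})))"
    unfolding bordered_minor_sum_def sum_subtractf[symmetric]
    by (intro sum.cong refl) (simp add: expand)
  also have "(\<Sum>S\<in>?C r. \<Sum>j<length cs.
        (-1) ^ j * X r0 (cs ! j) * minor_of X (rs @ ?sl S) (del_nth j cs @ ?sl S))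
      = (\<Sum>j<length cs. (-1) ^ j * X r0 (cs ! j) * bordered_minor_sum X n r rs (del_nth j cs))"
    unfolding bordered_minor_sum_def sum_distrib_left by (rule sum.swap)
  also have "(\<Sum>S\<in>?C r. \<Sum>i\<in>S. g i (?sl (S - {i})))
      = (if r = 0 then 0
         else (\<Sum>i\<in>{1..n}. X r0 i * bordered_minor_sum X n (r - 1) (i # rs) cs))"
  proof (cases r)
    case 0
    have "(\<Sum>i\<in>S. g i (?sl (S - {i}))) = 0" if "S \<in> ?C 0" for S
      using that fin[OF that] by simp
    then show ?thesis
      unfolding 0 by (simp add: sum.neutral)
  next
    case (Suc k)
    have vanish: "g i (?sl S') = 0" if "i \<in> S'" "S' \<in> ?C k" for i S'
    proof -
      have "i \<in> set (?sl S')"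
        using that fin[OF that(2)] by simp
      then obtain t where "t < length (?sl S')" "?sl S' ! t = i"
        by (auto simp: in_set_conv_nth)
      then show ?thesis
        unfolding g_def
        by (subst minor_of_repeated_row[of 0 _ "Suc (length rs + t)"]) (auto simp: nth_append)
    qed
    have finC: "finite (?C k)"
      by (auto intro: finite_subset[of _ "Pow {1..n}"])
    have "(\<Sum>S\<in>?C r. \<Sum>i\<in>S. g i (?sl (S - {i})))
        = (\<Sum>i\<in>{1..n}. \<Sum>S' | S' \<subseteq> {1..n} \<and> card S' = k \<and> i \<notin> S'. g i (?sl S'))"
      unfolding Suc by (rule sum_card_Suc_subsets_remove) simp
    also have "\<dots> = (\<Sum>i\<in>{1..n}. \<Sum>S'\<in>?C k. g i (?sl S'))"
      by (intro sum.cong refl sum.mono_neutral_left finC) (auto simp: vanish)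
    also have "\<dots> = (\<Sum>i\<in>{1..n}. X r0 i * bordered_minor_sum X n k (i # rs) cs)"
      by (simp add: g_def bordered_minor_sum_def sum_distrib_left)
    finally show ?thesis
      by (simp add: Suc)
  qed
  finally show ?thesis .
qed

lemma sum_Phi_mult_bordered_minor_sum_Cons:
  assumes "length cs = Suc (length rs)"
  shows "(\<Sum>i\<in>{1..n}. Phi r0 i * bordered_minor_sum Phi n r (i # rs) cs)
    = (\<Sum>j<length cs.
        (-1) ^ j * Phi_sq n r0 (cs ! j) * bordered_minor_sum Phi n r rs (del_nth j cs))
      - (if r = 0 then 0
         else (\<Sum>k\<in>{1..n}. Phi_sq n r0 k * bordered_minor_sum Phi n (r - 1) (k # rs) cs))"
proof -
  have cols: "(\<Sum>i\<in>{1..n}. Phi r0 i * (\<Sum>j<length cs.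
        (-1) ^ j * Phi i (cs ! j) * bordered_minor_sum Phi n r rs (del_nth j cs)))
      = (\<Sum>j<length cs.
        (-1) ^ j * Phi_sq n r0 (cs ! j) * bordered_minor_sum Phi n r rs (del_nth j cs))"
    unfolding Phi_sq_def by (rule sum_mult_sum_swap)
  have border: "(\<Sum>i\<in>{1..n}. Phi r0 i
        * (\<Sum>k\<in>{1..n}. Phi i k * bordered_minor_sum Phi n (r - 1) (k # rs) cs))
      = (\<Sum>k\<in>{1..n}. Phi_sq n r0 k * bordered_minor_sum Phi n (r - 1) (k # rs) cs)"
    unfolding Phi_sq_def
    using sum_mult_sum_swap[where s = "\<lambda>_. 1" and x = "Phi r0" and y = Phi
        and z = "\<lambda>k. bordered_minor_sum Phi n (r - 1) (k # rs) cs"]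
    by simp
  show ?thesis
  proof (cases "r = 0")
    case True
    show ?thesis
      unfolding bordered_minor_sum_Cons[OF assms, of Phi n r] if_P[OF True] diff_zero cols ..
  next
    case False
    show ?thesis
      unfolding bordered_minor_sum_Cons[OF assms, of Phi n r] if_not_P[OF False]
        right_diff_distrib sum_subtractf cols border ..
  qed
qed

lemma bordered_minor_sum_Phi_in_ideal:
  assumes "1 \<le> r" and "length cs = length rs"
    and "set rs \<subseteq> {1..n}" and "set cs \<subseteq> {1..n}"
  shows "(bordered_minor_sum Phi n r rs cs :: 'k::field mpoly) \<in> ideal.span (J_gens n)"
  using assms(2-)
proof (induction rs arbitrary: cs)
  case Nil
  then have "bordered_minor_sum Phi n r [] cs = (T n r :: 'k mpoly)"
    by (simp add: T_eq_bordered_minor_sum)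
  moreover have "(T n r :: 'k mpoly) \<in> ideal.span (J_gens n)"
  proof (cases "r \<le> n")
    case True
    then show ?thesis
      using assms(1) by (auto simp: J_gens_def intro: ideal.span_base)
  next
    case False
    then have "{S. S \<subseteq> {1..n} \<and> card S = r} = {}"
      using card_mono[of "{1..n}"] by fastforce
    then show ?thesis
      unfolding T_def by (simp only: sum.empty ideal.span_zero)
  qed
  ultimately show ?case by simp
next
  case (Cons r0 rs)
  let ?J = "ideal.span (J_gens n) :: 'k mpoly set"
  have len: "length cs = Suc (length rs)"
    using Cons.prems by simp
  have gen: "Phi_sq n r0 k \<in> ?J" if "k \<in> {1..n}" for k
    using that Cons.prems by (auto simp: J_gens_def intro: ideal.span_base)
  have col: "cs ! j \<in> {1..n}" if "j < length cs" for j
    using that Cons.prems(3) nth_mem by blast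
  have IH: "bordered_minor_sum Phi n r rs (del_nth j cs) \<in> ?J" if "j < length cs" for j
    using Cons.IH that Cons.prems set_del_nth_subset[of j cs] by auto
  have cols: "(\<Sum>j<length cs.
      (-1) ^ j * Phi r0 (cs ! j) * bordered_minor_sum Phi n r rs (del_nth j cs)) \<in> ?J"
    by (intro ideal.span_sum ideal.span_scale) (simp add: IH)
  have cols_sq: "(\<Sum>j<length cs.
      (-1) ^ j * Phi_sq n r0 (cs ! j) * bordered_minor_sum Phi n (r - 1) rs (del_nth j cs)) \<in> ?J"
    by (intro ideal.span_sum, rule ideal_span_mult_right, rule ideal.span_scale, rule gen)
      (metis col lessThan_iff)
  have "(\<Sum>k\<in>{1..n}. Phi_sq n r0 k * bordered_minor_sum Phi n (r - 1 - 1) (k # rs) cs) \<in> ?J"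
    by (intro ideal.span_sum ideal_span_mult_right gen)
  then have border_sq: "(if r - 1 = 0 then 0
      else \<Sum>k\<in>{1..n}. Phi_sq n r0 k * bordered_minor_sum Phi n (r - 1 - 1) (k # rs) cs) \<in> ?J"
    by (simp add: ideal.span_zero)
  have "r \<noteq> 0"
    using assms(1) by simp
  show ?case
    unfolding bordered_minor_sum_Cons[OF len, of Phi n r r0] if_not_P[OF \<open>r \<noteq> 0\<close>]
      sum_Phi_mult_bordered_minor_sum_Cons[OF len, where r = "r - 1"]
    by (intro ideal.span_diff cols cols_sq border_sq)
qed

theorem lemma3:
  fixes n p r :: nat and as bs :: "nat list"
  assumes "1 \<le> n" and "1 \<le> p" and "p \<le> n" and "1 \<le> r" and "r \<le> p"
    and "length as = p - r" and "length bs = p - r"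
    and "set as \<subseteq> {1..n}" and "set bs \<subseteq> {1..n}"
  shows "in_ideal (J_gens n :: 'k::field mpoly set) (Rel n r as bs)"
  unfolding in_ideal_iff_span Rel_eq_bordered_minor_sum
  using assms by (intro bordered_minor_sum_Phi_in_ideal) simp_all

end
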